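(* Let $R$ be a commutative local ring and $s\in R$. Then every upper triangular element $\left[\begin{smallmatrix} a&b\\ 0&c\end{smallmatrix}\right]$ ($a,b,c\in R$) of $M_2(R;s)$ is strongly clean in $M_2(R;s)$.
   Context: A commutative ring $R$ is local if it has a unique maximal ideal. For a commutative ring $R$ and $s\in R$, $M_2(R;s)$ denotes the ring whose elements are the $2\times 2$ arrays $\left[\begin{smallmatrix} a&b\\ c&d\end{smallmatrix}\right]$ with $a,b,c,d\in R$, with componentwise addition and multiplication $\left[\begin{smallmatrix} a&b\\ c&d\end{smallmatrix}\right]\left[\begin{smallmatrix} a'&b'\\ c'&d'\end{smallmatrix}\right]=\left[\begin{smallmatrix} aa'+s^2bc'&ab'+bd'\\ ca'+dc'&s^2cb'+dd'\end{smallmatrix}\right]$. An element $a$ of a ring $T$ is strongly clean if there is an idempotent $e\in T$ with $ae=ea$ and $a-e$ a unit of $T$. *)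

theory Defs
  imports Main
begin

definition is_ideal :: "'a::comm_ring_1 set \<Rightarrow> bool" where
  "is_ideal I \<longleftrightarrow> 0 \<in> I \<and> (\<forall>x\<in>I. \<forall>y\<in>I. x + y \<in> I) \<and> (\<forall>r. \<forall>x\<in>I. r * x \<in> I)"

definition is_maximal_ideal :: "'a::comm_ring_1 set \<Rightarrow> bool" where
  "is_maximal_ideal M \<longleftrightarrow> is_ideal M \<and> M \<noteq> UNIV \<and>
     (\<forall>J. is_ideal J \<and> M \<subseteq> J \<longrightarrow> J = M \<or> J = UNIV)"

definition local_ring :: "'a::comm_ring_1 itself \<Rightarrow> bool" where
  "local_ring _ \<longleftrightarrow> (\<exists>!M::'a set. is_maximal_ideal M)"

text \<open>The ring M_2(R;s): an element [a b; c d] is the tuple (a,b,c,d).\<close>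

type_synonym 'a m2 = "'a \<times> 'a \<times> 'a \<times> 'a"

definition m2_mult :: "'a::comm_ring_1 \<Rightarrow> 'a m2 \<Rightarrow> 'a m2 \<Rightarrow> 'a m2" where
  "m2_mult s X Y = (case X of (a, b, c, d) \<Rightarrow> case Y of (a', b', c', d') \<Rightarrow>
     (a*a' + s^2*b*c', a*b' + b*d', c*a' + d*c', s^2*c*b' + d*d'))"

definition m2_add :: "'a::comm_ring_1 m2 \<Rightarrow> 'a m2 \<Rightarrow> 'a m2" where
  "m2_add X Y = (case X of (a, b, c, d) \<Rightarrow> case Y of (a', b', c', d') \<Rightarrow>
     (a + a', b + b', c + c', d + d'))"

definition m2_sub :: "'a::comm_ring_1 m2 \<Rightarrow> 'a m2 \<Rightarrow> 'a m2" where
  "m2_sub X Y = (case X of (a, b, c, d) \<Rightarrow> case Y of (a', b', c', d') \<Rightarrow>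
     (a - a', b - b', c - c', d - d'))"

definition m2_one :: "'a::comm_ring_1 m2" where
  "m2_one = (1, 0, 0, 1)"

definition m2_unit :: "'a::comm_ring_1 \<Rightarrow> 'a m2 \<Rightarrow> bool" where
  "m2_unit s X \<longleftrightarrow> (\<exists>Y. m2_mult s X Y = m2_one \<and> m2_mult s Y X = m2_one)"

definition m2_idempotent :: "'a::comm_ring_1 \<Rightarrow> 'a m2 \<Rightarrow> bool" where
  "m2_idempotent s E \<longleftrightarrow> m2_mult s E E = E"

definition m2_strongly_clean :: "'a::comm_ring_1 \<Rightarrow> 'a m2 \<Rightarrow> bool" where
  "m2_strongly_clean s A \<longleftrightarrow> (\<exists>E. m2_idempotent s E \<and> m2_mult s A E = m2_mult s E A
      \<and> m2_unit s (m2_sub A E))"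

end

theory Submission
  imports Defs
begin

text \<open>In a local ring the nonunits form an ideal, so every element x is a unit or 1 - x is,
  and x - y is a unit whenever x is a unit and y is not. Choose the diagonal idempotents
  e1 = 0 or 1 according as a is a unit or not, and e2 likewise for c; then a - e1 and
  c - e2 are units. If e1 = e2 the scalar idempotent e1 I works. Otherwise exactly one of a, c
  is a unit, so a - c is a unit and the off-diagonal entry x of the idempotent
  [e1 x; 0 e2] can be solved from the commutation equation x (a - c) = b (e1 - e2).
  An upper triangular matrix with unit diagonal is a unit, whatever s is.\<close>

lemma is_ideal_eq_UNIV_if_unit:
  fixes u :: "'a::comm_ring_1"
  assumes "is_ideal I" "u \<in> I" "u dvd 1"
  shows "I = UNIV"
proof -
  obtain v where "1 = u * v" using assms(3) by (rule dvdE)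
  hence one: "1 \<in> I" using assms(1,2) unfolding is_ideal_def by (metis mult.commute)
  have "r \<in> I" for r
    using assms(1) one unfolding is_ideal_def by (metis mult.right_neutral)
  thus ?thesis by blast
qed

lemma is_ideal_principal: "is_ideal (range (\<lambda>r. r * (x::'a::comm_ring_1)))"
  unfolding is_ideal_def
proof (intro conjI ballI allI)
  show "0 \<in> range (\<lambda>r. r * x)" by (metis mult_zero_left rangeI)
next
  fix u v assume "u \<in> range (\<lambda>r. r * x)" "v \<in> range (\<lambda>r. r * x)"
  then obtain p q where "u = p * x" "v = q * x" by blast
  then show "u + v \<in> range (\<lambda>r. r * x)" by (metis distrib_right rangeI)
next
  fix r u assume "u \<in> range (\<lambda>r. r * x)"
  then obtain p where "u = p * x" by blast
  then show "r * u \<in> range (\<lambda>r. r * x)" by (metis mult.assoc rangeI)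
qed

lemma is_ideal_Union_chain:
  fixes C :: "'a::comm_ring_1 set set"
  assumes "C \<noteq> {}" "\<forall>I\<in>C. is_ideal I" "\<forall>I\<in>C. \<forall>J\<in>C. I \<subseteq> J \<or> J \<subseteq> I"
  shows "is_ideal (\<Union>C)"
  unfolding is_ideal_def
proof (intro conjI ballI allI)
  show "0 \<in> \<Union>C" using assms(1,2) by (auto simp: is_ideal_def)
next
  fix x y assume "x \<in> \<Union>C" "y \<in> \<Union>C"
  then obtain I J where "I \<in> C" "J \<in> C" "x \<in> I" "y \<in> J" by blast
  with assms(2,3) obtain K where "K \<in> C" "x \<in> K" "y \<in> K" by blast
  thus "x + y \<in> \<Union>C" using assms(2) unfolding is_ideal_def by blast
next
  fix r x assume "x \<in> \<Union>C"
  thus "r * x \<in> \<Union>C" using assms(2) unfolding is_ideal_def by blast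
qed

lemma ex_maximal_ideal_superset:
  fixes I :: "'a::comm_ring_1 set"
  assumes "is_ideal I" "1 \<notin> I"
  shows "\<exists>M. is_maximal_ideal M \<and> I \<subseteq> M"
proof -
  let ?A = "{J. is_ideal J \<and> 1 \<notin> J \<and> I \<subseteq> J}"
  have "\<exists>M\<in>?A. \<forall>J\<in>?A. M \<subseteq> J \<longrightarrow> J = M"
  proof (rule subset_Zorn_nonempty)
    show "?A \<noteq> {}" using assms by blast
  next
    fix C assume "C \<noteq> {}" "subset.chain ?A C"
    thus "\<Union>C \<in> ?A"
      using is_ideal_Union_chain[of C] by (auto simp: subset_chain_def)
  qed
  then obtain M where M: "M \<in> ?A" and max: "\<forall>J\<in>?A. M \<subseteq> J \<longrightarrow> J = M" by blast
  have "J = M \<or> J = UNIV" if "is_ideal J" "M \<subseteq> J" for J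
    using that M max is_ideal_eq_UNIV_if_unit[of J 1] by auto
  with M have "is_maximal_ideal M" unfolding is_maximal_ideal_def by blast
  with M show ?thesis by blast
qed

lemma local_ring_nonunits_ideal:
  assumes "local_ring TYPE('a::comm_ring_1)"
  shows "is_ideal {x::'a. \<not> x dvd 1}"
proof -
  obtain M :: "'a set" where M: "is_maximal_ideal M"
    and unique: "\<And>N. is_maximal_ideal N \<Longrightarrow> N = M"
    using assms unfolding local_ring_def by blast
  have "x \<in> M" if "\<not> x dvd 1" for x
  proof -
    have "1 \<notin> range (\<lambda>r. r * x)" using that by (metis dvd_triv_right rangeE)
    then obtain N where "is_maximal_ideal N" "range (\<lambda>r. r * x) \<subseteq> N"
      using ex_maximal_ideal_superset[OF is_ideal_principal] by blast
    thus "x \<in> M" using unique by (metis mult_1 rangeI subsetD)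
  qed
  moreover have "\<not> x dvd 1" if "x \<in> M" for x
    using M that is_ideal_eq_UNIV_if_unit[of M x] unfolding is_maximal_ideal_def by blast
  ultimately have "M = {x. \<not> x dvd 1}" by blast
  thus ?thesis using M unfolding is_maximal_ideal_def by simp
qed

lemma local_ring_unit_diff:
  fixes x y :: "'a::comm_ring_1"
  assumes "local_ring TYPE('a)" "x dvd 1" "\<not> y dvd 1"
  shows "(x - y) dvd 1"
proof (rule ccontr)
  assume "\<not> (x - y) dvd 1"
  hence "\<not> ((x - y) + y) dvd 1"
    using local_ring_nonunits_ideal[OF assms(1)] assms(3) unfolding is_ideal_def by blast
  thus False using assms(2) by simp
qed

lemma local_ring_sub_idempotent_unit:
  fixes x :: "'a::comm_ring_1"
  assumes "local_ring TYPE('a)"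
  shows "(x - (if x dvd 1 then 0 else 1)) dvd 1"
proof (cases "x dvd 1")
  case False
  hence "(1 - x) dvd 1" using local_ring_unit_diff[OF assms] by simp
  hence "(- (1 - x)) dvd 1" by (simp only: minus_dvd_iff)
  with False show ?thesis by simp
qed simp

lemma m2_unit_upper_triangular:
  fixes p q r s :: "'a::comm_ring_1"
  assumes "p dvd 1" "r dvd 1"
  shows "m2_unit s (p, q, 0, r)"
proof -
  obtain p' where p: "p * p' = 1" using assms(1) by (metis dvdE)
  obtain r' where r: "r * r' = 1" using assms(2) by (metis dvdE)
  let ?Y = "(p', - (p' * q * r'), 0, r')"
  have "p * (p' * q * r') = (p * p') * (q * r')" "p' * q * r' * r = (p' * q) * (r * r')"
    by (simp_all only: ac_simps)
  with p r have "p * (p' * q * r') = q * r'" "p' * q * r' * r = p' * q" by simp_all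
  with p r have "m2_mult s (p, q, 0, r) ?Y = m2_one" "m2_mult s ?Y (p, q, 0, r) = m2_one"
    by (simp_all add: m2_mult_def m2_one_def mult.commute)
  thus ?thesis unfolding m2_unit_def by blast
qed

text \<open>The equations on x say that [e1 x; 0 e2] is idempotent and commutes with [a b; 0 c].\<close>

lemma m2_strongly_clean_upper_triangularI:
  fixes a b c e1 e2 x s :: "'a::comm_ring_1"
  assumes "e1 * e1 = e1" "e2 * e2 = e2"
    and "(a - e1) dvd 1" "(c - e2) dvd 1"
    and "x * (e1 + e2) = x" "x * (a - c) = b * (e1 - e2)"
  shows "m2_strongly_clean s (a, b, 0, c)"
proof -
  let ?E = "(e1, x, 0, e2)"
  have "m2_idempotent s ?E"
    using assms(1,2,5) by (simp add: m2_idempotent_def m2_mult_def algebra_simps)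
  moreover have "a * x + b * e2 = e1 * b + x * c"
    using assms(6) by (simp add: algebra_simps)
  hence "m2_mult s (a, b, 0, c) ?E = m2_mult s ?E (a, b, 0, c)"
    by (simp add: m2_mult_def mult.commute)
  moreover have "m2_unit s (m2_sub (a, b, 0, c) ?E)"
    using m2_unit_upper_triangular[OF assms(3,4)] by (simp add: m2_sub_def)
  ultimately show ?thesis unfolding m2_strongly_clean_def by blast
qed

theorem lemma3p5:
  fixes s a b c :: "'a::comm_ring_1"
  assumes "local_ring TYPE('a)"
  shows "m2_strongly_clean s (a, b, 0, c)"
proof -
  define e1 :: 'a where "e1 = (if a dvd 1 then 0 else 1)"
  define e2 :: 'a where "e2 = (if c dvd 1 then 0 else 1)"
  have idem: "e1 * e1 = e1" "e2 * e2 = e2" by (simp_all add: e1_def e2_def)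
  have units: "(a - e1) dvd 1" "(c - e2) dvd 1"
    unfolding e1_def e2_def by (simp_all add: local_ring_sub_idempotent_unit[OF assms])
  show ?thesis
  proof (cases "e1 = e2")
    case True
    show ?thesis
      using m2_strongly_clean_upper_triangularI[OF idem units, of 0] True by simp
  next
    case False
    hence "(a dvd 1) \<noteq> (c dvd 1)" by (auto simp: e1_def e2_def split: if_splits)
    hence sum: "e1 + e2 = 1" by (auto simp: e1_def e2_def)
    have "(a - c) dvd 1"
      using local_ring_unit_diff[OF assms, of a c] local_ring_unit_diff[OF assms, of c a]
        \<open>(a dvd 1) \<noteq> (c dvd 1)\<close> by (metis minus_diff_eq minus_dvd_iff)
    then obtain k where k: "(a - c) * k = 1" by (metis dvdE)
    define x where "x = b * (e1 - e2) * k"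
    have "x * (a - c) = b * (e1 - e2) * ((a - c) * k)" by (simp add: x_def ac_simps)
    with k have "x * (a - c) = b * (e1 - e2)" by simp
    moreover have "x * (e1 + e2) = x" using sum by simp
    ultimately show ?thesis
      using m2_strongly_clean_upper_triangularI[OF idem units] by blast
  qed
qed

end
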